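(* Let $d\geq1$ and $0<p,q,r<\infty$. Suppose there are constants $C$ and $\eta$ such that \[ \|\mathcal{A}_1(f, g-\tau_h g)\|_{L^r}\leq C |h|^\eta \|f\|_{L^p}\|g\|_{L^q} \] for all $f,g$ and uniformly over all $h\in\mathbb{R}^d$ with $|h|\le 1$. Then $\frac1p+\frac1q\ge\frac1r$.
   Context: $d\sigma$ is the normalized surface measure on $S^{2d-1}\subset\mathbb{R}^d\times\mathbb{R}^d$, $\mathcal{A}_1(f,g)(x)=\int_{S^{2d-1}} f(x-y)g(x-z)\,d\sigma(y,z)$, and $\tau_h g(x)=g(x-h)$. *)

theory Defs
  imports "HOL-Analysis.Analysis"
begin

text \<open>Normalized surface measure on the unit sphere of a Euclidean space, via the
  cone-measure formula: for the unit sphere the normalized surface measure of A equals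
  the normalized Lebesgue measure of the cone over A, hence
  integral of F w.r.t. sigma = (1/vol(B)) * integral over B of F(x/|x|) dx.\<close>
definition sphere_avg :: "('a::euclidean_space \<Rightarrow> real) \<Rightarrow> real" where
  "sphere_avg F = (\<integral>x\<in>ball 0 1. F (scaleR (1 / norm x) x) \<partial>lborel) / measure lborel (ball (0::'a) 1)"

definition A1 :: "(real^'n \<Rightarrow> real) \<Rightarrow> (real^'n \<Rightarrow> real) \<Rightarrow> real^'n \<Rightarrow> real" where
  "A1 f g x = sphere_avg (\<lambda>(y, z). f (x - y) * g (x - z))"

definition transl :: "real^'n \<Rightarrow> (real^'n \<Rightarrow> real) \<Rightarrow> real^'n \<Rightarrow> real" where
  "transl h g x = g (x - h)"

definition Lp_norm :: "real \<Rightarrow> (real^'n \<Rightarrow> real) \<Rightarrow> real" where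
  "Lp_norm p f = (\<integral>x. \<bar>f x\<bar> powr p \<partial>lborel) powr (1 / p)"

end

theory Submission
  imports Defs "HOL-Real_Asymp.Real_Asymp"
begin

(* Take a bump f and a function g that is linear in the direction of a unit vector e near the
   origin, so that g - tau_e g = 1 there and A_1(f, g - tau_e g) = 1 near the origin. Now replace f
   and g by the sums of their translates by N points that are far apart from each other. All cross
   terms vanish, so A_1 of the sums is the sum of the translates of A_1(f, g - tau_e g): the left-hand
   side grows like N^(1/r), whereas the right-hand side grows like N^(1/p + 1/q). Letting N tend to
   infinity forces 1/r <= 1/p + 1/q. *)

lemma exponent_le_of_powr_bound:
  fixes a b K M :: real
  assumes le: "\<And>N::nat. K * real N powr a \<le> M * real N powr b" and "0 < K"
  shows "a \<le> b"
proof (rule ccontr)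
  assume "\<not> a \<le> b"
  then have "filterlim (\<lambda>N. real N powr (a - b)) at_top sequentially"
    by (intro filterlim_compose[OF real_powr_at_top filterlim_real_sequentially]) simp
  then obtain N0 where "\<forall>N\<ge>N0. M / K < real N powr (a - b)"
    by (auto simp: filterlim_at_top_dense eventually_sequentially)
  then obtain N :: nat where N: "M / K < real N powr (a - b)" "1 \<le> N"
    by (metis le_add1 le_add2)
  then have "M * real N powr b < K * real N powr (a - b) * real N powr b"
    using \<open>0 < K\<close> by (simp add: pos_divide_less_eq mult.commute)
  also have "\<dots> = K * real N powr a"
    using N(2) by (simp add: powr_diff)
  finally show False
    using le[of N] by simp
qed

lemma abs_sum_powr_disjoint:
  fixes \<phi> :: "'i \<Rightarrow> real"
  assumes "finite I" and "\<And>i j. i \<in> I \<Longrightarrow> j \<in> I \<Longrightarrow> \<phi> i \<noteq> 0 \<Longrightarrow> \<phi> j \<noteq> 0 \<Longrightarrow> i = j"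
  shows "\<bar>\<Sum>i\<in>I. \<phi> i\<bar> powr r = (\<Sum>i\<in>I. \<bar>\<phi> i\<bar> powr r)"
proof (cases "\<exists>i\<in>I. \<phi> i \<noteq> 0")
  case True
  then obtain i where i: "i \<in> I" "\<phi> i \<noteq> 0" by auto
  then have "\<phi> j = 0" if "j \<in> I - {i}" for j
    using assms(2) that by blast
  then show ?thesis
    using i assms(1) by (simp add: sum.remove)
qed simp

lemma integral_lborel_translate:
  fixes \<phi> :: "'a::euclidean_space \<Rightarrow> real"
  assumes [measurable]: "\<phi> \<in> borel_measurable borel"
  shows "(\<integral>x. \<phi> (x - a) \<partial>lborel) = (\<integral>x. \<phi> x \<partial>lborel)"
proof -
  have "(\<integral>x. \<phi> x \<partial>lborel) = (\<integral>x. \<phi> x \<partial>distr lborel borel ((+) (- a)))"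
    by (simp add: lborel_distr_plus)
  also have "\<dots> = (\<integral>x. \<phi> (- a + x) \<partial>lborel)"
    by (rule integral_distr) auto
  finally show ?thesis by simp
qed

lemma integrable_lborel_translate:
  fixes \<phi> :: "'a::euclidean_space \<Rightarrow> real"
  assumes [measurable]: "\<phi> \<in> borel_measurable borel" and "integrable lborel \<phi>"
  shows "integrable lborel (\<lambda>x. \<phi> (x - a))"
proof -
  have "integrable (distr lborel borel ((+) (- a))) \<phi>"
    using assms by (simp add: lborel_distr_plus)
  then show ?thesis
    by (subst (asm) integrable_distr_eq) auto
qed

lemma integrable_lborel_bounded_support:
  fixes \<phi> :: "'a::euclidean_space \<Rightarrow> real"
  assumes "\<phi> \<in> borel_measurable borel" and "\<And>x. \<bar>\<phi> x\<bar> \<le> M"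
    and "{x. \<phi> x \<noteq> 0} \<subseteq> ball 0 R"
  shows "integrable lborel \<phi>"
proof (rule Bochner_Integration.integrable_bound)
  show "integrable lborel (\<lambda>x. indicator (ball 0 R) x * M)"
    by (intro integrable_mult_left integrable_real_indicator emeasure_bounded_finite) auto
  show "AE x in lborel. norm (\<phi> x) \<le> norm (indicator (ball 0 R) x * M)"
    using assms(2,3) order_trans[OF abs_ge_zero assms(2)]
    by (intro AE_I2) (auto simp: indicator_def subset_iff)
qed (use assms(1) in auto)

lemma integrable_abs_powr_bounded_support:
  fixes \<phi> :: "'a::euclidean_space \<Rightarrow> real"
  assumes [measurable]: "\<phi> \<in> borel_measurable borel" and "\<And>x. \<bar>\<phi> x\<bar> \<le> M"
    and "{x. \<phi> x \<noteq> 0} \<subseteq> ball 0 R" and "0 < p"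
  shows "integrable lborel (\<lambda>x. \<bar>\<phi> x\<bar> powr p)"
  by (rule integrable_lborel_bounded_support[where M = "M powr p" and R = R])
     (use assms in \<open>auto intro: powr_mono2\<close>)

lemma Lp_norm_pos:
  fixes \<phi> :: "real^'n \<Rightarrow> real"
  assumes "integrable lborel (\<lambda>x. \<bar>\<phi> x\<bar> powr p)" and "\<And>x. norm x \<le> 1 \<Longrightarrow> \<phi> x = 1"
  shows "0 < Lp_norm p \<phi>"
proof -
  have "0 < measure lborel (cball (0::real^'n) 1)"
    using content_cball_pos[of 1 "0::real^'n"] by simp
  also have "\<dots> = (\<integral>x. indicator (cball (0::real^'n) 1) x \<partial>lborel)"
    by simp
  also have "\<dots> \<le> (\<integral>x. \<bar>\<phi> x\<bar> powr p \<partial>lborel)"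
  proof (rule integral_mono[OF _ assms(1)])
    show "integrable lborel (indicator (cball (0::real^'n) 1) :: real^'n \<Rightarrow> real)"
      by (intro integrable_real_indicator emeasure_bounded_finite) auto
    show "indicator (cball 0 1) x \<le> \<bar>\<phi> x\<bar> powr p" for x :: "real^'n"
      using assms(2)[of x] by (auto simp: indicator_def)
  qed
  finally show ?thesis
    unfolding Lp_norm_def by simp
qed

section \<open>Spherical averages and the bilinear average\<close>

(* At w = 0 the integrand evaluates F at sgn 0 = 0, so hypotheses on F are stated on the closed
   unit ball rather than on the sphere. *)
lemma sphere_avg_eq:
  fixes F :: "'a::euclidean_space \<Rightarrow> real"
  shows "sphere_avg F = (\<integral>w. indicator (ball 0 1) w * F (sgn w) \<partial>lborel) / measure lborel (ball (0::'a) 1)"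
  unfolding sphere_avg_def set_lebesgue_integral_def sgn_div_norm
  by (simp add: inverse_eq_divide)

lemma measure_unit_ball_pos: "0 < measure lborel (ball (0::'a::euclidean_space) 1)"
  using content_ball_pos[of 1 "0::'a"] by simp

lemma sphere_avg_cong:
  assumes "\<And>w. norm w \<le> 1 \<Longrightarrow> F w = G w"
  shows "sphere_avg F = sphere_avg G"
  unfolding sphere_avg_eq using assms[of "sgn _"] by (simp add: norm_sgn)

lemma sphere_avg_const [simp]: "sphere_avg (\<lambda>_::'a::euclidean_space. c) = c"
  unfolding sphere_avg_eq using measure_unit_ball_pos[where 'a='a]
  by (simp add: emeasure_bounded_finite)

lemma integrable_sphere_avg_integrand:
  fixes F :: "'a::euclidean_space \<Rightarrow> real"
  assumes [measurable]: "F \<in> borel_measurable borel" and "\<And>w. norm w \<le> 1 \<Longrightarrow> \<bar>F w\<bar> \<le> M"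
  shows "integrable lborel (\<lambda>w. indicator (ball 0 1) w * F (sgn w))"
proof (rule integrable_lborel_bounded_support[where M = M and R = 1])
  show "\<bar>indicator (ball 0 1) w * F (sgn w)\<bar> \<le> M" for w :: 'a
    using assms(2)[of "sgn w"] assms(2)[of 0] by (auto simp: indicator_def norm_sgn)
qed (auto simp: indicator_def)

lemma sphere_avg_sum:
  fixes F :: "'i \<Rightarrow> 'a::euclidean_space \<Rightarrow> real"
  assumes "\<And>i. i \<in> I \<Longrightarrow> F i \<in> borel_measurable borel"
    and "\<And>i w. i \<in> I \<Longrightarrow> norm w \<le> 1 \<Longrightarrow> \<bar>F i w\<bar> \<le> M"
  shows "sphere_avg (\<lambda>w. \<Sum>i\<in>I. F i w) = (\<Sum>i\<in>I. sphere_avg (F i))"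
  unfolding sphere_avg_eq sum_distrib_left sum_divide_distrib[symmetric]
  by (subst Bochner_Integration.integral_sum)
     (auto intro: integrable_sphere_avg_integrand assms)

lemma abs_sphere_avg_le:
  fixes F :: "'a::euclidean_space \<Rightarrow> real"
  assumes "F \<in> borel_measurable borel" and "\<And>w. norm w \<le> 1 \<Longrightarrow> \<bar>F w\<bar> \<le> M"
  shows "\<bar>sphere_avg F\<bar> \<le> M"
proof -
  let ?B = "ball (0::'a) 1"
  have "norm (\<integral>w. indicator ?B w * F (sgn w) \<partial>lborel) \<le> (\<integral>w. indicator ?B w * M \<partial>lborel)"
  proof (rule Bochner_Integration.integral_norm_bound_integral)
    show "integrable lborel (\<lambda>w. indicator ?B w * M)"
      by (intro integrable_mult_left integrable_real_indicator emeasure_bounded_finite) auto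
    show "norm (indicator ?B w * F (sgn w)) \<le> indicator ?B w * M" for w
      using assms(2)[of "sgn w"] by (auto simp: indicator_def norm_sgn)
  qed (rule integrable_sphere_avg_integrand[OF assms])
  also have "\<dots> = measure lborel ?B * M"
    by (simp add: emeasure_bounded_finite)
  finally show ?thesis
    unfolding sphere_avg_eq using measure_unit_ball_pos[where 'a='a]
    by (simp add: divide_le_eq mult.commute)
qed

lemma borel_measurable_sphere_avg:
  fixes F :: "'b \<Rightarrow> 'a::euclidean_space \<Rightarrow> real"
  assumes "(\<lambda>(x, w). F x w) \<in> borel_measurable (N \<Otimes>\<^sub>M borel)"
  shows "(\<lambda>x. sphere_avg (F x)) \<in> borel_measurable N"
proof -
  have F: "(\<lambda>(x, w). F x w) \<in> borel_measurable (N \<Otimes>\<^sub>M lborel)"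
    using assms by (simp cong: measurable_cong_sets)
  have "(\<lambda>(x, w). (x, sgn w)) \<in> N \<Otimes>\<^sub>M lborel \<rightarrow>\<^sub>M N \<Otimes>\<^sub>M lborel"
    by measurable
  from measurable_compose[OF this F]
  have "(\<lambda>(x, w). indicator (ball 0 1) w * F x (sgn w)) \<in> borel_measurable (N \<Otimes>\<^sub>M lborel)"
    unfolding case_prod_beta
    by (intro borel_measurable_times measurable_compose[OF measurable_snd borel_measurable_indicator])
       (auto simp: case_prod_beta)
  from lborel.borel_measurable_lebesgue_integral[OF this]
  show ?thesis
    unfolding sphere_avg_eq by simp
qed

lemma borel_measurable_A1_integrand:
  fixes f g :: "'a::euclidean_space \<Rightarrow> real"
  assumes [measurable]: "f \<in> borel_measurable borel" "g \<in> borel_measurable borel"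
  shows "(\<lambda>(y, z). f (x - y) * g (x - z)) \<in> borel_measurable borel"
  by (subst borel_prod[symmetric]) measurable

lemma borel_measurable_A1:
  fixes f g :: "real^'n \<Rightarrow> real"
  assumes [measurable]: "f \<in> borel_measurable borel" "g \<in> borel_measurable borel"
  shows "A1 f g \<in> borel_measurable borel"
proof -
  have "(\<lambda>(x, w). case w of (y, z) \<Rightarrow> f (x - y) * g (x - z))
      \<in> borel_measurable (borel \<Otimes>\<^sub>M (borel \<Otimes>\<^sub>M borel))"
    by measurable
  then have "(\<lambda>(x, w). case w of (y, z) \<Rightarrow> f (x - y) * g (x - z)) \<in> borel_measurable (borel \<Otimes>\<^sub>M borel)"
    by (simp add: borel_prod)
  from borel_measurable_sphere_avg[OF this]
  show ?thesis
    unfolding A1_def[abs_def] .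
qed

lemma abs_A1_le:
  fixes f g :: "real^'n \<Rightarrow> real"
  assumes [measurable]: "f \<in> borel_measurable borel" "g \<in> borel_measurable borel"
    and "\<And>u. \<bar>f u\<bar> \<le> a" and "\<And>u. \<bar>g u\<bar> \<le> b"
  shows "\<bar>A1 f g x\<bar> \<le> a * b"
  unfolding A1_def
proof (rule abs_sphere_avg_le)
  show "(\<lambda>(y, z). f (x - y) * g (x - z)) \<in> borel_measurable borel"
    by (rule borel_measurable_A1_integrand) fact+
  show "\<bar>case w of (y, z) \<Rightarrow> f (x - y) * g (x - z)\<bar> \<le> a * b" for w
    using assms(3,4) order_trans[OF abs_ge_zero assms(3)]
    by (auto simp: case_prod_beta abs_mult intro: mult_mono)
qed

lemma A1_eq_const:
  assumes "\<And>y z. norm y \<le> 1 \<Longrightarrow> norm z \<le> 1 \<Longrightarrow> f (x - y) * g (x - z) = c"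
  shows "A1 f g x = c"
proof -
  have "A1 f g x = sphere_avg (\<lambda>_ :: (real^'a) \<times> (real^'a). c)"
    unfolding A1_def
    by (rule sphere_avg_cong)
       (use assms norm_fst_le norm_snd_le order_trans in \<open>fastforce simp: case_prod_beta\<close>)
  then show ?thesis by simp
qed

lemma A1_support:
  assumes "{u. f u \<noteq> 0} \<subseteq> ball 0 R"
  shows "{x. A1 f g x \<noteq> 0} \<subseteq> ball 0 (R + 1)"
proof (rule subsetI, rule ccontr)
  fix x assume "x \<in> {x. A1 f g x \<noteq> 0}" "x \<notin> ball 0 (R + 1)"
  moreover have "f (x - y) * g (x - z) = 0" if "norm y \<le> 1" for y z
  proof -
    have "norm x \<le> norm y + norm (x - y)" by (rule norm_triangle_sub)
    then show ?thesis using that assms \<open>x \<notin> ball 0 (R + 1)\<close> by auto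
  qed
  ultimately show False
    using A1_eq_const[of f x g 0] by auto
qed

section \<open>Sums of separated translates\<close>

definition separated :: "real \<Rightarrow> 'a::metric_space set \<Rightarrow> bool" where
  "separated d S \<longleftrightarrow> (\<forall>a\<in>S. \<forall>b\<in>S. a \<noteq> b \<longrightarrow> d \<le> dist a b)"

lemma separated_eqI:
  assumes "separated d S" "a \<in> S" "b \<in> S" "norm (x - a) < R" "norm (x - b) < R'" "R + R' \<le> d"
  shows "a = b"
proof (rule ccontr)
  assume "a \<noteq> b"
  moreover have "dist a b \<le> norm (x - a) + norm (x - b)"
    by (metis dist_norm dist_triangle2 norm_minus_commute)
  ultimately show False
    using assms unfolding separated_def by fastforce
qed

lemma separated_exists:
  assumes "0 < d"
  shows "\<exists>S::'a::euclidean_space set. finite S \<and> card S = N \<and> separated d S"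
proof -
  obtain e :: 'a where e: "norm e = 1"
    using vector_choose_size[of 1] by auto
  define S where "S = (\<lambda>i. (d * real i) *\<^sub>R e) ` {..<N}"
  have dist: "dist ((d * real i) *\<^sub>R e) ((d * real j) *\<^sub>R e) = d * \<bar>real i - real j\<bar>" for i j
    using e \<open>0 < d\<close> by (simp add: dist_norm abs_mult flip: scaleR_diff_left right_diff_distrib)
  have "inj_on (\<lambda>i. (d * real i) *\<^sub>R e) {..<N}"
    using e \<open>0 < d\<close> by (intro inj_onI) auto
  then have "card S = N"
    unfolding S_def by (simp add: card_image)
  moreover have "separated d S"
    unfolding separated_def S_def using dist \<open>0 < d\<close> by auto
  ultimately show ?thesis
    unfolding S_def by blast
qed

definition sum_translates :: "'a set \<Rightarrow> ('a::real_normed_vector \<Rightarrow> real) \<Rightarrow> 'a \<Rightarrow> real" where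
  "sum_translates S \<phi> x = (\<Sum>a\<in>S. \<phi> (x - a))"

lemma continuous_on_sum_translates:
  assumes "continuous_on UNIV \<phi>"
  shows "continuous_on UNIV (sum_translates S \<phi>)"
proof -
  have "continuous_on UNIV (\<lambda>x. \<phi> (x - a))" for a
    by (rule continuous_on_compose2[OF assms]) (auto intro: continuous_intros)
  then show ?thesis
    unfolding sum_translates_def[abs_def] by (rule continuous_on_sum)
qed

lemma bounded_support_sum_translates:
  assumes "finite S" and "{u. \<phi> u \<noteq> 0} \<subseteq> ball 0 R"
  shows "bounded {x. sum_translates S \<phi> x \<noteq> 0}"
proof (rule bounded_subset)
  show "bounded (\<Union>a\<in>S. ball a R)"
    using \<open>finite S\<close> by auto
  show "{x. sum_translates S \<phi> x \<noteq> 0} \<subseteq> (\<Union>a\<in>S. ball a R)"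
  proof
    fix x assume "x \<in> {x. sum_translates S \<phi> x \<noteq> 0}"
    then obtain a where "a \<in> S" "\<phi> (x - a) \<noteq> 0"
      unfolding sum_translates_def by (auto dest: sum.not_neutral_contains_not_neutral)
    then show "x \<in> (\<Union>a\<in>S. ball a R)"
      using assms(2) by (force simp: dist_norm norm_minus_commute)
  qed
qed

lemma sum_translates_diff_transl:
  "(\<lambda>x. sum_translates S g x - transl h (sum_translates S g) x)
     = sum_translates S (\<lambda>x. g x - transl h g x)"
  unfolding sum_translates_def transl_def by (simp add: fun_eq_iff sum_subtractf algebra_simps)

lemma Lp_norm_sum_translates:
  fixes \<phi> :: "real^'n \<Rightarrow> real"
  assumes [measurable]: "\<phi> \<in> borel_measurable borel" and "\<And>u. \<bar>\<phi> u\<bar> \<le> M"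
    and supp: "{u. \<phi> u \<noteq> 0} \<subseteq> ball 0 R" and "0 < p"
    and S: "finite S" "separated d S" "2 * R \<le> d"
  shows "Lp_norm p (sum_translates S \<phi>) = card S powr (1 / p) * Lp_norm p \<phi>"
proof -
  have pointwise: "\<bar>sum_translates S \<phi> x\<bar> powr p = (\<Sum>a\<in>S. \<bar>\<phi> (x - a)\<bar> powr p)" for x
    unfolding sum_translates_def
  proof (rule abs_sum_powr_disjoint[OF \<open>finite S\<close>])
    fix a b assume "a \<in> S" "b \<in> S" "\<phi> (x - a) \<noteq> 0" "\<phi> (x - b) \<noteq> 0"
    with supp S(2,3) show "a = b"
      by (intro separated_eqI) auto
  qed
  have "(\<integral>x. \<bar>sum_translates S \<phi> x\<bar> powr p \<partial>lborel) = (\<Sum>a\<in>S. \<integral>x. \<bar>\<phi> (x - a)\<bar> powr p \<partial>lborel)"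
    unfolding pointwise
    by (intro Bochner_Integration.integral_sum integrable_lborel_translate
        integrable_abs_powr_bounded_support[OF assms(1-4)]) measurable
  also have "\<dots> = card S * (\<integral>x. \<bar>\<phi> x\<bar> powr p \<partial>lborel)"
    using integral_lborel_translate[of "\<lambda>x. \<bar>\<phi> x\<bar> powr p"] by simp
  finally show ?thesis
    unfolding Lp_norm_def by (simp add: powr_mult integral_nonneg_AE)
qed

lemma sum_translates_mult_separated:
  assumes supp: "{u. f u \<noteq> 0} \<subseteq> ball 0 R" "{u. g u \<noteq> 0} \<subseteq> ball 0 R'"
    and S: "finite S" "separated d S" "R + R' + norm (u - v) \<le> d"
  shows "sum_translates S f u * sum_translates S g v = (\<Sum>a\<in>S. f (u - a) * g (v - a))"
proof -
  have cross: "f (u - a) * g (v - b) = 0" if "a \<in> S" "b \<in> S" "a \<noteq> b" for a b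
  proof (rule ccontr)
    assume "f (u - a) * g (v - b) \<noteq> 0"
    then have "norm (u - a) < R" "norm (v - b) < R'"
      using supp by auto
    moreover have "norm (u - b) \<le> norm (v - b) + norm (u - v)"
      using norm_triangle_ineq[of "v - b" "u - v"] by (simp add: algebra_simps)
    ultimately show False
      using separated_eqI[OF S(2) that(1,2), of u R "R' + norm (u - v)"] S(3) that(3) by linarith
  qed
  have "(\<Sum>b\<in>S. f (u - a) * g (v - b)) = f (u - a) * g (v - a)" if "a \<in> S" for a
  proof -
    have "(\<Sum>b\<in>{a}. f (u - a) * g (v - b)) = (\<Sum>b\<in>S. f (u - a) * g (v - b))"
      by (rule sum.mono_neutral_left[OF S(1)]) (use that cross in auto)
    then show ?thesis
      by simp
  qed
  then show ?thesis
    unfolding sum_translates_def sum_product by (rule sum.cong[OF refl])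
qed

lemma A1_sum_translates:
  fixes f g :: "real^'n \<Rightarrow> real"
  assumes [measurable]: "f \<in> borel_measurable borel" "g \<in> borel_measurable borel"
    and bounds: "\<And>u. \<bar>f u\<bar> \<le> a" "\<And>u. \<bar>g u\<bar> \<le> b"
    and supp: "{u. f u \<noteq> 0} \<subseteq> ball 0 R" "{u. g u \<noteq> 0} \<subseteq> ball 0 R'"
    and S: "finite S" "separated d S" "R + R' + 2 \<le> d"
  shows "A1 (sum_translates S f) (sum_translates S g) = sum_translates S (A1 f g)"
proof
  fix x
  have diagonal: "sum_translates S f (x - y) * sum_translates S g (x - z)
      = (\<Sum>a\<in>S. f (x - a - y) * g (x - a - z))" if "norm y \<le> 1" "norm z \<le> 1" for y z
  proof -
    have "norm (x - y - (x - z)) \<le> 2"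
      using norm_triangle_ineq4[of z y] that by simp
    then show ?thesis
      using sum_translates_mult_separated[OF supp S(1,2), of "x - y" "x - z"] S(3)
      by (simp add: algebra_simps)
  qed
  have "A1 (sum_translates S f) (sum_translates S g) x
      = sphere_avg (\<lambda>(y, z). \<Sum>a\<in>S. f (x - a - y) * g (x - a - z))"
    unfolding A1_def
    by (rule sphere_avg_cong) (use diagonal norm_fst_le norm_snd_le order_trans in \<open>fastforce simp: case_prod_beta\<close>)
  also have "\<dots> = (\<Sum>a\<in>S. A1 f g (x - a))"
    unfolding A1_def case_prod_beta
  proof (rule sphere_avg_sum)
    show "(\<lambda>w. f (x - a - fst w) * g (x - a - snd w)) \<in> borel_measurable borel" for a
      using borel_measurable_A1_integrand[of f g "x - a"] by (simp add: case_prod_beta')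
    show "\<bar>f (x - c - fst w) * g (x - c - snd w)\<bar> \<le> a * b" for c w
      using bounds order_trans[OF abs_ge_zero bounds(1)] by (auto simp: abs_mult intro: mult_mono)
  qed
  finally show "A1 (sum_translates S f) (sum_translates S g) x = sum_translates S (A1 f g) x"
    unfolding sum_translates_def .
qed

lemma Lp_norm_A1_sum_translates:
  fixes f g :: "real^'n \<Rightarrow> real"
  assumes [measurable]: "f \<in> borel_measurable borel" "g \<in> borel_measurable borel"
    and bounds: "\<And>u. \<bar>f u\<bar> \<le> a" "\<And>u. \<bar>g u\<bar> \<le> b"
    and supp: "{u. f u \<noteq> 0} \<subseteq> ball 0 R" "{u. g u \<noteq> 0} \<subseteq> ball 0 R'"
    and S: "finite S" "separated d S" "R + R' + 2 \<le> d" "2 * (R + 1) \<le> d" and "0 < r"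
  shows "Lp_norm r (A1 (sum_translates S f) (sum_translates S g)) = card S powr (1 / r) * Lp_norm r (A1 f g)"
  unfolding A1_sum_translates[OF assms(1-9)]
proof (rule Lp_norm_sum_translates)
  show "A1 f g \<in> borel_measurable borel"
    by (rule borel_measurable_A1) fact+
  show "\<bar>A1 f g u\<bar> \<le> a * b" for u
    by (rule abs_A1_le) fact+
  show "{u. A1 f g u \<noteq> 0} \<subseteq> ball 0 (R + 1)"
    by (rule A1_support) fact
qed (use S \<open>0 < r\<close> in auto)

section \<open>The test functions\<close>

definition bump :: "real^'n \<Rightarrow> real" where
  "bump u = max 0 (min 1 (5 - norm u))"

definition linear_bump :: "real^'n \<Rightarrow> real^'n \<Rightarrow> real" where
  "linear_bump e u = (e \<bullet> u) * bump u"

definition bump_difference :: "real^'n \<Rightarrow> real^'n \<Rightarrow> real" where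
  "bump_difference e = (\<lambda>u. linear_bump e u - transl e (linear_bump e) u)"

lemma continuous_on_bump: "continuous_on UNIV bump"
  unfolding bump_def[abs_def] by (intro continuous_intros)

lemma continuous_on_linear_bump: "continuous_on UNIV (linear_bump e)"
  unfolding linear_bump_def[abs_def] by (intro continuous_intros continuous_on_bump)

lemma continuous_on_bump_difference: "continuous_on UNIV (bump_difference e)"
  unfolding bump_difference_def transl_def
  by (intro continuous_intros continuous_on_compose2[OF continuous_on_linear_bump]) auto

lemma borel_measurable_bump [measurable]: "bump \<in> borel_measurable borel"
  by (rule borel_measurable_continuous_onI[OF continuous_on_bump])

lemma borel_measurable_linear_bump [measurable]: "linear_bump e \<in> borel_measurable borel"
  by (rule borel_measurable_continuous_onI[OF continuous_on_linear_bump])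

lemma borel_measurable_bump_difference [measurable]: "bump_difference e \<in> borel_measurable borel"
  by (rule borel_measurable_continuous_onI[OF continuous_on_bump_difference])

lemma abs_bump_le: "\<bar>bump u\<bar> \<le> 1"
  by (simp add: bump_def)

lemma bump_eq_1: "norm u \<le> 4 \<Longrightarrow> bump u = 1"
  by (simp add: bump_def)

lemma support_bump: "{u. bump u \<noteq> 0} \<subseteq> ball 0 5"
  by (auto simp: bump_def)

lemma abs_linear_bump_le:
  assumes "norm e = 1"
  shows "\<bar>linear_bump e u\<bar> \<le> 5"
proof (cases "norm u < 5")
  case True
  have "\<bar>e \<bullet> u\<bar> \<le> 5"
    using Cauchy_Schwarz_ineq2[of e u] True assms by simp
  then show ?thesis
    using mult_mono[of "\<bar>e \<bullet> u\<bar>" 5 "\<bar>bump u\<bar>" 1] abs_bump_le[of u]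
    by (simp add: linear_bump_def abs_mult)
next
  case False
  then show ?thesis
    by (simp add: linear_bump_def bump_def)
qed

lemma linear_bump_eq_inner: "norm u \<le> 4 \<Longrightarrow> linear_bump e u = e \<bullet> u"
  by (simp add: linear_bump_def bump_eq_1)

lemma support_linear_bump: "{u. linear_bump e u \<noteq> 0} \<subseteq> ball 0 5"
  using support_bump by (auto simp: linear_bump_def)

lemma abs_bump_difference_le: "norm e = 1 \<Longrightarrow> \<bar>bump_difference e u\<bar> \<le> 10"
  using abs_linear_bump_le[of e u] abs_linear_bump_le[of e "u - e"]
  by (simp add: bump_difference_def transl_def)

lemma bump_difference_eq_1:
  assumes "norm e = 1" and "norm u \<le> 3"
  shows "bump_difference e u = 1"
proof -
  have "norm (u - e) \<le> 4"
    using norm_triangle_ineq4[of u e] assms by simp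
  then show ?thesis
    using assms by (simp add: bump_difference_def transl_def linear_bump_eq_inner inner_diff_right
        flip: power2_norm_eq_inner)
qed

lemma support_bump_difference:
  assumes "norm e = 1"
  shows "{u. bump_difference e u \<noteq> 0} \<subseteq> ball 0 6"
proof
  fix u assume "u \<in> {u. bump_difference e u \<noteq> 0}"
  then have "linear_bump e u \<noteq> 0 \<or> linear_bump e (u - e) \<noteq> 0"
    by (auto simp: bump_difference_def transl_def)
  then have "norm u < 5 \<or> norm (u - e) < 5"
    using support_linear_bump[of e] by auto
  then show "u \<in> ball 0 6"
    using norm_triangle_sub[of u e] assms by auto
qed

lemma A1_bump_bump_difference_eq_1:
  fixes e x :: "real^'n"
  assumes "norm e = 1" and "norm x \<le> 1"
  shows "A1 bump (bump_difference e) x = 1"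
proof (rule A1_eq_const)
  fix y z :: "real^'n" assume "norm y \<le> 1" "norm z \<le> 1"
  then have "norm (x - y) \<le> 4" "norm (x - z) \<le> 3"
    using norm_triangle_ineq4[of x y] norm_triangle_ineq4[of x z] assms(2) by linarith+
  then show "bump (x - y) * bump_difference e (x - z) = 1"
    using assms(1) by (simp add: bump_eq_1 bump_difference_eq_1)
qed

lemma Lp_norm_A1_bump_bump_difference_pos:
  assumes "norm e = 1" and "0 < r"
  shows "0 < Lp_norm r (A1 bump (bump_difference e))"
proof (rule Lp_norm_pos)
  show "integrable lborel (\<lambda>x. \<bar>A1 bump (bump_difference e) x\<bar> powr r)"
    by (intro integrable_abs_powr_bounded_support[where M = "1 * 10" and R = "5 + 1"]
        borel_measurable_A1 abs_A1_le A1_support support_bump abs_bump_le abs_bump_difference_le assms)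
       measurable
qed (use A1_bump_bump_difference_eq_1 assms in auto)

theorem proposition6p2:
  fixes p q r C \<eta> :: real
  assumes "0 < p" and "0 < q" and "0 < r"
    and "\<forall>(f :: real^'n \<Rightarrow> real) (g :: real^'n \<Rightarrow> real) (h :: real^'n).
           continuous_on UNIV f \<and> bounded {x. f x \<noteq> 0} \<and>
           continuous_on UNIV g \<and> bounded {x. g x \<noteq> 0} \<and> norm h \<le> 1 \<longrightarrow>
           Lp_norm r (A1 f (\<lambda>x. g x - transl h g x))
             \<le> C * norm h powr \<eta> * Lp_norm p f * Lp_norm q g"
  shows "1 / p + 1 / q \<ge> 1 / r"
proof -
  obtain e :: "real^'n" where e: "norm e = 1"
    using vector_choose_size[of 1] by auto
  note bounds = abs_bump_le abs_linear_bump_le[OF e] abs_bump_difference_le[OF e]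
  note supports = support_bump support_linear_bump support_bump_difference[OF e]
  let ?K = "Lp_norm r (A1 bump (bump_difference e))"
  let ?M = "C * Lp_norm p (bump :: real^'n \<Rightarrow> real) * Lp_norm q (linear_bump e)"
  have scaling: "?K * real N powr (1 / r) \<le> ?M * real N powr (1 / p + 1 / q)" for N
  proof -
    obtain S :: "(real^'n) set" where S: "finite S" "card S = N" "separated 14 S"
      using separated_exists[of 14] by auto
    let ?f = "sum_translates S bump" and ?g = "sum_translates S (linear_bump e)"
    have "?K * real N powr (1 / r) = Lp_norm r (A1 ?f (\<lambda>x. ?g x - transl e ?g x))"
      using Lp_norm_A1_sum_translates[OF _ _ bounds(1,3) supports(1,3) S(1,3) _ _ \<open>0 < r\<close>] S(2)
      by (simp add: sum_translates_diff_transl flip: bump_difference_def)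
    also have "\<dots> \<le> C * norm e powr \<eta> * Lp_norm p ?f * Lp_norm q ?g"
      using assms(4)[rule_format, of ?f ?g e] e
        bounded_support_sum_translates[OF S(1) supports(1)] bounded_support_sum_translates[OF S(1) supports(2)]
      by (simp add: continuous_on_sum_translates continuous_on_bump continuous_on_linear_bump)
    also have "\<dots> = ?M * real N powr (1 / p + 1 / q)"
      using Lp_norm_sum_translates[OF _ bounds(1) supports(1) \<open>0 < p\<close> S(1,3)]
        Lp_norm_sum_translates[OF _ bounds(2) supports(2) \<open>0 < q\<close> S(1,3)] e S(2)
      by (simp add: powr_add)
    finally show ?thesis .
  qed
  show ?thesis
    using exponent_le_of_powr_bound[OF scaling Lp_norm_A1_bump_bump_difference_pos[OF e \<open>0 < r\<close>]] by simp
qed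

end
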